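(* Let $n\ge3$ and $s\ge1$ be integers. Then $p_{2s}(n,2sd)\to\infty$ as $d\to\infty$.
   Context: $\mathbb{R}[x_1,\dots,x_n]_e$ denotes the real vector space of homogeneous polynomials (forms) of degree $e$ in $n$ variables. For integers $n,m,d\ge1$, let $\Sigma^m_{n,md}\subset\mathbb{R}[x_1,\dots,x_n]_{md}$ be the set of forms $f=\sum_{i=1}^r f_i^m$ with $r\in\mathbb{N}$ and $f_i\in\mathbb{R}[x_1,\dots,x_n]_d$. The homogeneous Pythagoras number $p_m(n,md)$ is the minimal $\ell$ such that every $f\in\Sigma^m_{n,md}$ admits such a representation with $r\le\ell$. *)

theory Defs
  imports Complex_Main "HOL-Library.Poly_Mapping" "HOL-Library.Extended_Nat"
begin

text \<open>Real polynomials in the variables x_0, x_1, ... : a monomial is a finitely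
supported exponent vector (type nat =>0 nat), a polynomial is a finitely supported
coefficient map on monomials.\<close>

type_synonym rpoly = "(nat \<Rightarrow>\<^sub>0 nat) \<Rightarrow>\<^sub>0 real"

definition mon_deg :: "(nat \<Rightarrow>\<^sub>0 nat) \<Rightarrow> nat" where
  "mon_deg m = (\<Sum>i\<in>Poly_Mapping.keys m. Poly_Mapping.lookup m i)"

definition is_form :: "nat \<Rightarrow> nat \<Rightarrow> rpoly \<Rightarrow> bool" where
  "is_form n e f \<longleftrightarrow> (\<forall>m\<in>Poly_Mapping.keys f. mon_deg m = e \<and> (\<forall>i\<in>Poly_Mapping.keys m. i < n))"

definition sum_powers_rep :: "nat \<Rightarrow> nat \<Rightarrow> nat \<Rightarrow> nat \<Rightarrow> rpoly \<Rightarrow> bool" where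
  "sum_powers_rep m n d r f \<longleftrightarrow>
     (\<exists>fs. length fs = r \<and> (\<forall>g\<in>set fs. is_form n d g) \<and> f = sum_list (map (\<lambda>g. g ^ m) fs))"

definition SigmaPow :: "nat \<Rightarrow> nat \<Rightarrow> nat \<Rightarrow> rpoly set" where
  "SigmaPow m n d = {f. \<exists>r. sum_powers_rep m n d r f}"

text \<open>Homogeneous Pythagoras number p_m(n, md) (infinity if no finite bound exists).\<close>
definition pyth :: "nat \<Rightarrow> nat \<Rightarrow> nat \<Rightarrow> enat" where
  "pyth m n d = Inf {enat l | l. \<forall>f\<in>SigmaPow m n d. \<exists>r\<le>l. sum_powers_rep m n d r f}"

end

theory Submission
  imports Defs "HOL-Analysis.Analysis" "HOL-Library.Function_Algebras"
    "HOL-Computational_Algebra.Polynomial"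
begin

text \<open>
  Let l_k = x_0 + k x_1 + k^2 x_2 for k = 0..d, let H_j be the product of all l_k with k \<noteq> j,
  and suppose that the sum of the H_j^(2s) equals a sum of r powers g_i^(2s) of forms of degree d.
  In the plane x_2 = 1 the l_k cut out d + 1 lines in general position. On the line l_j = 0 every
  H_m with m \<noteq> j vanishes, so each g_i vanishes at the d points where the other lines cross it and
  hence g_i = e_ij H_j on that line. Where the lines j and k cross, all forms vanish, and comparing
  first-order terms of the identity there yields sum_i (e_ij + \<tau> e_ik)^(2s) = 1 + \<tau>^(2s).
  Differentiating in \<tau> shows that the vectors (e_ij)_i and (e_ik^(2s-1))_i of R^r form a
  biorthogonal system of size d + 1, so r \<ge> d + 1.
\<close>

section \<open>Evaluation of polynomials and forms\<close>

definition eval_mon :: "(nat \<Rightarrow>\<^sub>0 nat) \<Rightarrow> (nat \<Rightarrow> real) \<Rightarrow> real" where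
  "eval_mon m x = (\<Prod>i\<in>Poly_Mapping.keys m. x i ^ Poly_Mapping.lookup m i)"

definition eval_rpoly :: "rpoly \<Rightarrow> (nat \<Rightarrow> real) \<Rightarrow> real" where
  "eval_rpoly p x = (\<Sum>m\<in>Poly_Mapping.keys p. Poly_Mapping.lookup p m * eval_mon m x)"

definition var :: "nat \<Rightarrow> real \<Rightarrow> rpoly" where
  "var i c = Poly_Mapping.single (Poly_Mapping.single i 1) c"

lemma keys_add_nat:
  "Poly_Mapping.keys (a + b) = Poly_Mapping.keys a \<union> Poly_Mapping.keys (b :: 'a \<Rightarrow>\<^sub>0 nat)"
  by (auto simp: in_keys_iff lookup_add)

lemma eval_mon_superset:
  assumes "finite S" "Poly_Mapping.keys m \<subseteq> S"
  shows "eval_mon m x = (\<Prod>i\<in>S. x i ^ Poly_Mapping.lookup m i)"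
  unfolding eval_mon_def
  by (rule prod.mono_neutral_left) (use assms in \<open>auto simp: in_keys_iff\<close>)

lemma eval_mon_add: "eval_mon (a + b) x = eval_mon a x * eval_mon b x"
proof -
  let ?S = "Poly_Mapping.keys a \<union> Poly_Mapping.keys b"
  have "eval_mon (a + b) x = (\<Prod>i\<in>?S. x i ^ Poly_Mapping.lookup (a + b) i)"
    by (rule eval_mon_superset) (auto simp: keys_add_nat)
  also have "\<dots> = (\<Prod>i\<in>?S. x i ^ Poly_Mapping.lookup a i) * (\<Prod>i\<in>?S. x i ^ Poly_Mapping.lookup b i)"
    by (simp add: lookup_add power_add prod.distrib)
  also have "\<dots> = eval_mon a x * eval_mon b x"
    by (simp add: eval_mon_superset[symmetric])
  finally show ?thesis .
qed

lemma eval_rpoly_superset: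
  assumes "finite S" "Poly_Mapping.keys p \<subseteq> S"
  shows "eval_rpoly p x = (\<Sum>m\<in>S. Poly_Mapping.lookup p m * eval_mon m x)"
  unfolding eval_rpoly_def
  by (rule sum.mono_neutral_left) (use assms in \<open>auto simp: in_keys_iff\<close>)

lemma eval_rpoly_zero [simp]: "eval_rpoly 0 x = 0"
  and eval_rpoly_one [simp]: "eval_rpoly 1 x = 1"
  and eval_rpoly_single [simp]: "eval_rpoly (Poly_Mapping.single m c) x = c * eval_mon m x"
  by (simp_all add: eval_rpoly_def eval_mon_def)

lemma eval_rpoly_var [simp]: "eval_rpoly (var i c) x = c * x i"
  by (simp add: var_def eval_mon_def)

lemma eval_rpoly_add [simp]: "eval_rpoly (p + q) x = eval_rpoly p x + eval_rpoly q x"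
proof -
  let ?S = "Poly_Mapping.keys p \<union> Poly_Mapping.keys q"
  have "eval_rpoly (p + q) x = (\<Sum>m\<in>?S. Poly_Mapping.lookup (p + q) m * eval_mon m x)"
    by (rule eval_rpoly_superset) (auto dest: subsetD[OF keys_add])
  also have "\<dots> = eval_rpoly p x + eval_rpoly q x"
    by (simp add: lookup_add distrib_right sum.distrib eval_rpoly_superset[symmetric])
  finally show ?thesis .
qed

lemma eval_rpoly_sum: "eval_rpoly (sum f A) x = (\<Sum>a\<in>A. eval_rpoly (f a) x)"
  by (induction A rule: infinite_finite_induct) auto

lemma rpoly_as_sum_single:
  "p = (\<Sum>m\<in>Poly_Mapping.keys p. Poly_Mapping.single m (Poly_Mapping.lookup p m))"
  by (rule poly_mapping_eqI) (simp add: lookup_sum lookup_single when_def in_keys_iff sum.delta)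

lemma eval_rpoly_mult [simp]: "eval_rpoly (p * q) x = eval_rpoly p x * eval_rpoly q x"
proof -
  let ?P = "Poly_Mapping.keys p" and ?Q = "Poly_Mapping.keys q"
  let ?p = "Poly_Mapping.lookup p" and ?q = "Poly_Mapping.lookup q"
  have "p * q = (\<Sum>a\<in>?P. \<Sum>b\<in>?Q. Poly_Mapping.single (a + b) (?p a * ?q b))"
    by (subst (1 2) rpoly_as_sum_single) (simp only: sum_product mult_single)
  then have "eval_rpoly (p * q) x = (\<Sum>a\<in>?P. \<Sum>b\<in>?Q. (?p a * eval_mon a x) * (?q b * eval_mon b x))"
    by (simp add: eval_rpoly_sum eval_mon_add mult_ac)
  also have "\<dots> = eval_rpoly p x * eval_rpoly q x"
    by (simp only: eval_rpoly_def sum_product)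
  finally show ?thesis .
qed

lemma eval_rpoly_power [simp]: "eval_rpoly (p ^ k) x = eval_rpoly p x ^ k"
  by (induction k) auto

lemma eval_rpoly_prod: "eval_rpoly (prod f A) x = (\<Prod>a\<in>A. eval_rpoly (f a) x)"
  by (induction A rule: infinite_finite_induct) auto

lemma eval_rpoly_sum_list: "eval_rpoly (sum_list (map f xs)) x = (\<Sum>g\<leftarrow>xs. eval_rpoly (f g) x)"
  by (induction xs) auto

lemma differentiable_prod:
  fixes f :: "'i \<Rightarrow> 'a::real_normed_vector \<Rightarrow> 'b::real_normed_field"
  shows "(\<And>a. a \<in> A \<Longrightarrow> f a differentiable at z) \<Longrightarrow> (\<lambda>y. \<Prod>a\<in>A. f a y) differentiable at z"
  by (induction A rule: infinite_finite_induct) (auto intro!: differentiable_mult)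

lemma differentiable_eval_rpoly:
  fixes \<phi> :: "'a::real_normed_vector \<Rightarrow> nat \<Rightarrow> real"
  assumes "\<And>i. (\<lambda>z. \<phi> z i) differentiable at z"
  shows "(\<lambda>z. eval_rpoly p (\<phi> z)) differentiable at z"
  unfolding eval_rpoly_def eval_mon_def
  by (intro differentiable_sum differentiable_prod differentiable_mult differentiable_power
        differentiable_const assms ballI finite_keys)

lemma mon_deg_superset:
  assumes "finite S" "Poly_Mapping.keys m \<subseteq> S"
  shows "mon_deg m = (\<Sum>i\<in>S. Poly_Mapping.lookup m i)"
  unfolding mon_deg_def
  by (rule sum.mono_neutral_left) (use assms in \<open>auto simp: in_keys_iff\<close>)

lemma mon_deg_add: "mon_deg (a + b) = mon_deg a + mon_deg b"
proof -
  let ?S = "Poly_Mapping.keys a \<union> Poly_Mapping.keys b"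
  have "mon_deg (a + b) = (\<Sum>i\<in>?S. Poly_Mapping.lookup (a + b) i)"
    by (rule mon_deg_superset) (auto simp: keys_add_nat)
  also have "\<dots> = mon_deg a + mon_deg b"
    by (simp add: lookup_add sum.distrib mon_deg_superset[symmetric])
  finally show ?thesis .
qed

lemma is_form_add: "is_form n e p \<Longrightarrow> is_form n e q \<Longrightarrow> is_form n e (p + q)"
  unfolding is_form_def by (blast dest: subsetD[OF keys_add])

lemma is_form_mult:
  assumes "is_form n a p" "is_form n b q"
  shows "is_form n (a + b) (p * q)"
  unfolding is_form_def
proof
  fix m assume "m \<in> Poly_Mapping.keys (p * q)"
  then obtain u v where m: "m = u + v" "u \<in> Poly_Mapping.keys p" "v \<in> Poly_Mapping.keys q"
    using keys_mult by blast
  with assms show "mon_deg m = a + b \<and> (\<forall>i\<in>Poly_Mapping.keys m. i < n)"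
    unfolding is_form_def m(1) mon_deg_add keys_add_nat by fastforce
qed

lemma is_form_one: "is_form n 0 1"
  by (simp add: is_form_def mon_deg_def)

lemma is_form_prod:
  "finite A \<Longrightarrow> (\<And>a. a \<in> A \<Longrightarrow> is_form n 1 (f a)) \<Longrightarrow> is_form n (card A) (prod f A)"
  by (induction A rule: finite_induct) (auto simp: is_form_one intro: is_form_mult[of n 1, simplified])

lemma is_form_var: "i < n \<Longrightarrow> is_form n 1 (var i c)"
  by (simp add: var_def is_form_def mon_deg_def)

section \<open>Polynomial functions of one real variable\<close>

definition poly_fun_le :: "nat \<Rightarrow> (real \<Rightarrow> real) \<Rightarrow> bool" where
  "poly_fun_le k F \<longleftrightarrow> (\<exists>Q. degree Q \<le> k \<and> F = poly Q)"

lemma poly_fun_le_const: "poly_fun_le k (\<lambda>t. c)"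
  unfolding poly_fun_le_def by (rule exI[of _ "[:c:]"]) auto

lemma poly_fun_le_add:
  assumes "poly_fun_le k F" "poly_fun_le k G"
  shows "poly_fun_le k (\<lambda>t. F t + G t)"
proof -
  obtain P Q where "degree P \<le> k" "F = poly P" "degree Q \<le> k" "G = poly Q"
    using assms unfolding poly_fun_le_def by blast
  then show ?thesis
    unfolding poly_fun_le_def by (intro exI[of _ "P + Q"]) (auto intro: order_trans[OF degree_add_le_max])
qed

lemma poly_fun_le_mult:
  assumes "poly_fun_le a F" "poly_fun_le b G"
  shows "poly_fun_le (a + b) (\<lambda>t. F t * G t)"
proof -
  obtain P Q where "degree P \<le> a" "F = poly P" "degree Q \<le> b" "G = poly Q"
    using assms unfolding poly_fun_le_def by blast
  then show ?thesis
    unfolding poly_fun_le_def by (intro exI[of _ "P * Q"]) (auto intro: order_trans[OF degree_mult_le])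
qed

lemma poly_fun_le_sum:
  "(\<And>x. x \<in> A \<Longrightarrow> poly_fun_le k (F x)) \<Longrightarrow> poly_fun_le k (\<lambda>t. \<Sum>x\<in>A. F x t)"
  by (induction A rule: infinite_finite_induct) (auto simp: poly_fun_le_const intro: poly_fun_le_add)

lemma poly_fun_le_prod:
  "(\<And>x. x \<in> A \<Longrightarrow> poly_fun_le (k x) (F x)) \<Longrightarrow> poly_fun_le (\<Sum>x\<in>A. k x) (\<lambda>t. \<Prod>x\<in>A. F x t)"
  by (induction A rule: infinite_finite_induct) (auto simp: poly_fun_le_const intro: poly_fun_le_mult)

lemma poly_fun_le_power: "poly_fun_le a F \<Longrightarrow> poly_fun_le (a * e) (\<lambda>t. F t ^ e)"
  by (induction e) (auto simp: poly_fun_le_const dest: poly_fun_le_mult)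

lemma poly_fun_le_eval_rpoly:
  assumes "\<And>i. poly_fun_le 1 (\<lambda>t. \<phi> t i)" and "is_form n d p"
  shows "poly_fun_le d (\<lambda>t. eval_rpoly p (\<phi> t))"
  unfolding eval_rpoly_def
proof (rule poly_fun_le_sum)
  fix m assume m: "m \<in> Poly_Mapping.keys p"
  have "poly_fun_le (\<Sum>i\<in>Poly_Mapping.keys m. 1 * Poly_Mapping.lookup m i) (\<lambda>t. eval_mon m (\<phi> t))"
    unfolding eval_mon_def by (intro poly_fun_le_prod poly_fun_le_power assms(1))
  then have "poly_fun_le (0 + d) (\<lambda>t. Poly_Mapping.lookup p m * eval_mon m (\<phi> t))"
    using m assms(2) by (intro poly_fun_le_mult poly_fun_le_const) (simp add: is_form_def mon_deg_def)
  then show "poly_fun_le d (\<lambda>t. Poly_Mapping.lookup p m * eval_mon m (\<phi> t))"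
    by simp
qed

lemma poly_fun_le_vanishing:
  assumes "poly_fun_le (card A) F" and "finite A" and "\<And>a. a \<in> A \<Longrightarrow> F a = 0"
  shows "\<exists>c. \<forall>t. F t = c * (\<Prod>a\<in>A. t - a)"
proof -
  obtain Q where Q: "degree Q \<le> card A" "F = poly Q"
    using assms(1) unfolding poly_fun_le_def by blast
  define P where "P = (\<Prod>a\<in>A. [:- a, 1:])"
  have degP: "degree P = card A"
    unfolding P_def by (subst degree_prod_eq_sum_degree) auto
  have "Q = smult (coeff Q (card A)) P"
  proof (rule poly_eqI_degree_lead_coeff[where A = A])
    show "coeff Q (card A) = coeff (smult (coeff Q (card A)) P) (card A)"
      using lead_coeff_prod[of "\<lambda>a. [:- a, 1:]" A] by (simp add: degP[symmetric] P_def)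
  qed (use Q assms(2,3) degP in \<open>auto simp: P_def poly_prod\<close>)
  then show ?thesis
    by (auto simp: Q(2) P_def poly_prod intro!: exI[of _ "coeff Q (card A)"] dest: arg_cong[of _ _ poly])
qed

lemma sum_fun_apply: "(\<Sum>a\<in>A. f a) x = (\<Sum>a\<in>A. f a x)"
  by (induction A rule: infinite_finite_induct) auto

lemma card_le_of_biorthogonal:
  fixes v w :: "'j \<Rightarrow> nat \<Rightarrow> real"
  assumes "finite J"
    and biorth: "\<And>j k. j \<in> J \<Longrightarrow> k \<in> J \<Longrightarrow> (\<Sum>i<r. w k i * v j i) = (if j = k then 1 else 0)"
  shows "card J \<le> r"
proof -
  interpret fvs: vector_space "\<lambda>c (f :: nat \<Rightarrow> real) i. c * f i"
    by unfold_locales (auto simp: algebra_simps)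
  define V where "V j = (\<lambda>i. if i < r then v j i else 0)" for j
  define unit :: "nat \<Rightarrow> nat \<Rightarrow> real" where "unit i = (\<lambda>l. if l = i then 1 else 0)" for i
  have pair: "(\<Sum>i<r. w k i * V j i) = (if j = k then 1 else 0)" if "j \<in> J" "k \<in> J" for j k
    using biorth[OF that] by (simp add: V_def)
  have "inj_on V J"
    by (rule inj_onI) (metis pair one_neq_zero)
  have decomp: "V j = (\<Sum>i<r. (\<lambda>l. v j i * unit i l))" for j
    by (auto simp: V_def unit_def fun_eq_iff sum_fun_apply if_distrib[of "times _"] cong: if_cong)
  have span: "V ` J \<subseteq> fvs.span (unit ` {..<r})"
  proof (clarify, unfold decomp, rule fvs.span_sum)
    show "(\<lambda>l. v j i * unit i l) \<in> fvs.span (unit ` {..<r})" if "i \<in> {..<r}" for i j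
      using that by (intro fvs.span_scale fvs.span_base) simp
  qed
  have "fvs.independent (V ` J)"
  proof (rule fvs.independent_if_scalars_zero)
    fix c x assume comb: "(\<Sum>x\<in>V ` J. (\<lambda>i. c x * x i)) = 0" and "x \<in> V ` J"
    then obtain k where k: "k \<in> J" "x = V k" by blast
    have "0 = (\<Sum>i<r. w k i * (\<Sum>j\<in>J. c (V j) * V j i))"
      using arg_cong[OF comb, of "\<lambda>f. \<Sum>i<r. w k i * f i"]
      by (simp add: sum.reindex[OF \<open>inj_on V J\<close>] sum_fun_apply)
    also have "\<dots> = (\<Sum>j\<in>J. c (V j) * (\<Sum>i<r. w k i * V j i))"
      by (simp add: sum_distrib_left sum_distrib_right mult_ac sum.swap[of _ J])
    also have "\<dots> = c x"
      using k \<open>finite J\<close> by (simp add: pair if_distrib cong: if_cong)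
    finally show "c x = 0" by simp
  qed (use \<open>finite J\<close> in simp)
  then have "card (V ` J) \<le> card (unit ` {..<r})"
    using fvs.independent_span_bound[OF _ _ span] by blast
  also have "\<dots> \<le> r"
    using card_image_le[of "{..<r}" unit] by simp
  finally show ?thesis
    by (simp add: card_image[OF \<open>inj_on V J\<close>])
qed

lemma even_power_sum_eq_0_imp:
  fixes f :: "'i \<Rightarrow> real"
  assumes "finite A" "(\<Sum>a\<in>A. f a ^ (2 * s)) = 0" "a \<in> A"
  shows "f a = 0"
proof -
  have "f a ^ (2 * s) = 0"
    using assms by (subst (asm) sum_nonneg_eq_0_iff) auto
  then show ?thesis by simp
qed

lemma frechet_derivative_lincomb:
  fixes F :: "'a::real_normed_vector \<Rightarrow> real"
  assumes "F differentiable at z"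
  shows "frechet_derivative F (at z) (a *\<^sub>R v + b *\<^sub>R w) =
    a * frechet_derivative F (at z) v + b * frechet_derivative F (at z) w"
proof -
  have "linear (frechet_derivative F (at z))"
    using assms frechet_derivative_works has_derivative_linear by blast
  then show ?thesis by (simp add: linear_add linear_scale)
qed

lemma has_field_derivative_along_line:
  fixes F :: "'a::real_normed_vector \<Rightarrow> real"
  assumes "F differentiable at (p + t0 *\<^sub>R u)"
  shows "((\<lambda>t. F (p + t *\<^sub>R u)) has_field_derivative frechet_derivative F (at (p + t0 *\<^sub>R u)) u) (at t0)"
proof -
  let ?D = "frechet_derivative F (at (p + t0 *\<^sub>R u))"
  have line: "((\<lambda>t. p + t *\<^sub>R u) has_derivative (\<lambda>h. h *\<^sub>R u)) (at t0)"
    by (auto intro!: derivative_eq_intros)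
  have "((\<lambda>t. F (p + t *\<^sub>R u)) has_derivative (\<lambda>h. ?D (h *\<^sub>R u))) (at t0)"
    using diff_chain_at[OF line frechet_derivative_works[THEN iffD1, OF assms]] by (simp add: comp_def)
  moreover have "(\<lambda>h. ?D (h *\<^sub>R u)) = (*) (?D u)"
    using frechet_derivative_lincomb[OF assms, of _ u 0 u] by (simp add: fun_eq_iff mult.commute)
  ultimately show ?thesis
    by (simp add: has_field_derivative_def)
qed

lemma sum_powers_frechet_derivative_eq:
  fixes F H :: "'i \<Rightarrow> 'a::real_normed_vector \<Rightarrow> real"
  assumes "finite I" "finite M"
    and "\<And>i. i \<in> I \<Longrightarrow> F i differentiable at q" "\<And>m. m \<in> M \<Longrightarrow> H m differentiable at q"
    and "\<And>i. i \<in> I \<Longrightarrow> F i q = 0" "\<And>m. m \<in> M \<Longrightarrow> H m q = 0"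
    and sum_eq: "\<And>z. (\<Sum>i\<in>I. F i z ^ e) = (\<Sum>m\<in>M. H m z ^ e)"
  shows "(\<Sum>i\<in>I. frechet_derivative (F i) (at q) w ^ e) = (\<Sum>m\<in>M. frechet_derivative (H m) (at q) w ^ e)"
proof -
  have slope: "((\<lambda>t. K (q + t *\<^sub>R w) / t) \<longlongrightarrow> frechet_derivative K (at q) w) (at 0)"
    if "K differentiable at q" "K q = 0" for K :: "'a \<Rightarrow> real"
    using has_field_derivative_along_line[of K q 0 w] that by (simp add: has_field_derivative_iff)
  have "((\<lambda>t. \<Sum>i\<in>I. (F i (q + t *\<^sub>R w) / t) ^ e) \<longlongrightarrow> (\<Sum>i\<in>I. frechet_derivative (F i) (at q) w ^ e)) (at 0)"
    by (intro tendsto_sum tendsto_power slope) (use assms in auto)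
  moreover have "((\<lambda>t. \<Sum>i\<in>I. (F i (q + t *\<^sub>R w) / t) ^ e) \<longlongrightarrow>
      (\<Sum>m\<in>M. frechet_derivative (H m) (at q) w ^ e)) (at 0)"
    unfolding power_divide sum_divide_distrib[symmetric] sum_eq
    unfolding sum_divide_distrib power_divide[symmetric]
    by (intro tendsto_sum tendsto_power slope) (use assms in auto)
  ultimately show ?thesis
    using tendsto_unique[OF at_neq_bot] by blast
qed

lemma sum_power_affine_eq_imp:
  fixes a b :: "'i \<Rightarrow> real"
  assumes "finite I" "2 \<le> e" and sum_eq: "\<And>\<tau>. (\<Sum>i\<in>I. (a i + \<tau> * b i) ^ e) = c + \<tau> ^ e"
  shows "(\<Sum>i\<in>I. a i ^ (e - 1) * b i) = 0"
proof -
  have "((\<lambda>\<tau>. \<Sum>i\<in>I. (a i + \<tau> * b i) ^ e) has_field_derivative (\<Sum>i\<in>I. real e * a i ^ (e - 1) * b i)) (at 0)"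
    by (auto intro!: derivative_eq_intros sum.cong)
  moreover have "((\<lambda>\<tau>. c + \<tau> ^ e) has_field_derivative 0) (at 0)"
    using assms(2) by (auto intro!: derivative_eq_intros)
  ultimately have "(\<Sum>i\<in>I. real e * a i ^ (e - 1) * b i) = 0"
    unfolding sum_eq using DERIV_unique by blast
  then show ?thesis
    using assms(2) by (simp add: sum_distrib_left[symmetric] mult.assoc)
qed

section \<open>A configuration of lines in general position\<close>

text \<open>On the plane \<open>x\<^sub>2 = 1\<close>, \<open>ell l\<close> is the linear form \<open>x\<^sub>0 + l x\<^sub>1 + l\<^sup>2 x\<^sub>2\<close>; its zero set is
  parametrized by \<open>line l\<close>, and \<open>meet j k\<close> is the crossing point of the lines \<open>j\<close> and \<open>k\<close>.\<close>

definition ell :: "nat \<Rightarrow> real \<times> real \<Rightarrow> real" where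
  "ell l z = fst z + real l * snd z + (real l)\<^sup>2"

definition cofactor :: "nat \<Rightarrow> nat \<Rightarrow> real \<times> real \<Rightarrow> real" where
  "cofactor d j z = (\<Prod>l\<in>{..d} - {j}. ell l z)"

definition line_dir :: "nat \<Rightarrow> real \<times> real" where
  "line_dir j = (- real j, 1)"

definition line :: "nat \<Rightarrow> real \<Rightarrow> real \<times> real" where
  "line j t = (- (real j)\<^sup>2, 0) + t *\<^sub>R line_dir j"

definition meet :: "nat \<Rightarrow> nat \<Rightarrow> real \<times> real" where
  "meet j k = line j (- (real j + real k))"

lemma has_field_derivative_line:
  "F differentiable at (line j t0) \<Longrightarrow>
    ((\<lambda>t. F (line j t)) has_field_derivative frechet_derivative F (at (line j t0)) (line_dir j)) (at t0)"
  unfolding line_def by (rule has_field_derivative_along_line)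

lemma ell_line: "ell l (line j t) = (real l - real j) * (t + real l + real j)"
  by (simp add: ell_def line_def line_dir_def algebra_simps power2_eq_square)

lemma meet_eq_line_snd: "meet j k = line k (- (real j + real k))"
  by (simp add: meet_def line_def line_dir_def algebra_simps power2_eq_square)

lemma meet_commute: "meet j k = meet k j"
  by (metis meet_def meet_eq_line_snd add.commute)

lemma differentiable_cofactor: "cofactor d j differentiable at z"
  unfolding cofactor_def ell_def[abs_def]
  by (intro differentiable_prod differentiable_add differentiable_mult differentiable_const
      bounded_linear_imp_differentiable bounded_linear_fst bounded_linear_snd)

lemma cofactor_line_other: "m \<noteq> j \<Longrightarrow> j \<le> d \<Longrightarrow> cofactor d m (line j t) = 0"
  unfolding cofactor_def by (rule prod_zero) (auto simp: ell_line intro!: bexI[of _ j])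

lemma cofactor_meet: "m \<le> d \<Longrightarrow> j \<le> d \<Longrightarrow> k \<le> d \<Longrightarrow> j \<noteq> k \<Longrightarrow> cofactor d m (meet j k) = 0"
  by (metis cofactor_line_other meet_commute meet_def)

lemma cofactor_line_self:
  "cofactor d j (line j t) = (\<Prod>l\<in>{..d} - {j}. real l - real j) * (\<Prod>l\<in>{..d} - {j}. t + real l + real j)"
  by (simp add: cofactor_def ell_line prod.distrib)

lemma frechet_derivative_cofactor_other:
  assumes "m \<noteq> j" "j \<le> d"
  shows "frechet_derivative (cofactor d m) (at (line j t0)) (line_dir j) = 0"
proof -
  have "((\<lambda>t. cofactor d m (line j t)) has_field_derivative
      frechet_derivative (cofactor d m) (at (line j t0)) (line_dir j)) (at t0)"
    by (rule has_field_derivative_line[OF differentiable_cofactor])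
  moreover have "((\<lambda>t. cofactor d m (line j t)) has_field_derivative 0) (at t0)"
    using cofactor_line_other[OF assms] by simp
  ultimately show ?thesis
    using DERIV_unique by blast
qed

lemma frechet_derivative_cofactor_self:
  assumes "j \<le> d" "k \<le> d" "j \<noteq> k"
  shows "frechet_derivative (cofactor d j) (at (meet j k)) (line_dir j) \<noteq> 0"
proof -
  define t0 where "t0 = - (real j + real k)"
  define R where
    "R t = (real k - real j) * (\<Prod>l\<in>{..d} - {j, k}. (real l - real j) * (t + real l + real j))" for t
  have "cofactor d j (line j t) = R t * (t - t0)" for t
  proof -
    have "{..d} - {j} = insert k ({..d} - {j, k})"
      using assms by auto
    then show ?thesis
      by (simp add: cofactor_def ell_line R_def t0_def algebra_simps)
  qed
  moreover have "isCont R t0"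
    unfolding R_def by (intro continuous_intros)
  ultimately have "((\<lambda>t. cofactor d j (line j t)) has_field_derivative R t0) (at t0)"
    by (auto simp: CARAT_DERIV)
  moreover have "((\<lambda>t. cofactor d j (line j t)) has_field_derivative
      frechet_derivative (cofactor d j) (at (meet j k)) (line_dir j)) (at t0)"
    unfolding meet_def t0_def[symmetric] by (rule has_field_derivative_line[OF differentiable_cofactor])
  moreover have "R t0 \<noteq> 0"
    using assms by (auto simp: R_def t0_def)
  ultimately show ?thesis
    using DERIV_unique by metis
qed

locale sum_powers_of_cofactors =
  fixes d s r :: nat and G :: "nat \<Rightarrow> real \<times> real \<Rightarrow> real"
  assumes d_pos: "1 \<le> d" and s_pos: "1 \<le> s"
    and differentiable_G: "\<And>i z. i < r \<Longrightarrow> G i differentiable at z"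
    and poly_fun_le_G_line: "\<And>i j. i < r \<Longrightarrow> j \<le> d \<Longrightarrow> poly_fun_le d (\<lambda>t. G i (line j t))"
    and sum_powers_eq: "\<And>z. (\<Sum>i<r. G i z ^ (2 * s)) = (\<Sum>m\<le>d. cofactor d m z ^ (2 * s))"
begin

lemma G_eq_0_if_cofactors_eq_0:
  assumes "\<And>m. m \<le> d \<Longrightarrow> cofactor d m z = 0" "i < r"
  shows "G i z = 0"
proof -
  have "(\<Sum>i<r. G i z ^ (2 * s)) = 0"
    using assms(1) s_pos by (simp add: sum_powers_eq)
  then show ?thesis
    using even_power_sum_eq_0_imp[where A = "{..<r}" and f = "\<lambda>i. G i z"] assms(2) by blast
qed

lemma G_meet: "i < r \<Longrightarrow> j \<le> d \<Longrightarrow> k \<le> d \<Longrightarrow> j \<noteq> k \<Longrightarrow> G i (meet j k) = 0"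
  by (rule G_eq_0_if_cofactors_eq_0) (auto intro: cofactor_meet)

text \<open>On the \<open>j\<close>-th line every \<open>G i\<close> has degree at most \<open>d\<close> and vanishes at the \<open>d\<close> points
  where the other lines cross it, so it is a multiple of \<open>cofactor d j\<close>.\<close>
lemma G_line_multiple:
  assumes "i < r" "j \<le> d"
  shows "\<exists>c. \<forall>t. G i (line j t) = c * cofactor d j (line j t)"
proof -
  define A where "A = (\<lambda>l. - (real l + real j)) ` ({..d} - {j})"
  have "card A = d"
    unfolding A_def using assms(2) by (subst card_image) (auto simp: inj_on_def)
  moreover have "G i (line j a) = 0" if "a \<in> A" for a
  proof -
    obtain l where "l \<le> d" "l \<noteq> j" "line j a = meet j l"
      using \<open>a \<in> A\<close> by (auto simp: A_def meet_def add.commute)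
    then show ?thesis
      using assms by (metis G_meet)
  qed
  ultimately obtain c where c: "\<And>t. G i (line j t) = c * (\<Prod>a\<in>A. t - a)"
    using poly_fun_le_vanishing[of A "\<lambda>t. G i (line j t)"] poly_fun_le_G_line[OF assms]
    unfolding A_def by auto
  define K where "K = (\<Prod>l\<in>{..d} - {j}. real l - real j)"
  have "K \<noteq> 0"
    by (auto simp: K_def)
  have "(\<Prod>a\<in>A. t - a) = (\<Prod>l\<in>{..d} - {j}. t + real l + real j)" for t
    unfolding A_def by (subst prod.reindex) (auto simp: inj_on_def algebra_simps)
  then have "G i (line j t) = c / K * cofactor d j (line j t)" for t
    using \<open>K \<noteq> 0\<close> by (simp add: c cofactor_line_self K_def)
  then show ?thesis by blast
qed

definition coef :: "nat \<Rightarrow> nat \<Rightarrow> real" where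
  "coef i j = (SOME c. \<forall>t. G i (line j t) = c * cofactor d j (line j t))"

lemma G_line: "i < r \<Longrightarrow> j \<le> d \<Longrightarrow> G i (line j t) = coef i j * cofactor d j (line j t)"
  unfolding coef_def using someI_ex[OF G_line_multiple] by blast

lemma frechet_derivative_G_meet:
  assumes "i < r" "j \<le> d"
  shows "frechet_derivative (G i) (at (meet j k)) (line_dir j) =
    coef i j * frechet_derivative (cofactor d j) (at (meet j k)) (line_dir j)"
proof -
  let ?t0 = "- (real j + real k)"
  have "((\<lambda>t. G i (line j t)) has_field_derivative
      frechet_derivative (G i) (at (line j ?t0)) (line_dir j)) (at ?t0)"
    by (rule has_field_derivative_line[OF differentiable_G[OF assms(1)]])
  moreover have "((\<lambda>t. G i (line j t)) has_field_derivative
      coef i j * frechet_derivative (cofactor d j) (at (line j ?t0)) (line_dir j)) (at ?t0)"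
    unfolding G_line[OF assms] by (intro DERIV_cmult has_field_derivative_line differentiable_cofactor)
  ultimately show ?thesis
    unfolding meet_def using DERIV_unique by blast
qed

text \<open>Compare the first-order parts of both sides at \<open>meet j k\<close> in a direction that normalizes
  the derivatives of \<open>cofactor d j\<close> and \<open>cofactor d k\<close> along their lines.\<close>
lemma sum_powers_coef:
  assumes jk: "j \<le> d" "k \<le> d" "j \<noteq> k"
  shows "(\<Sum>i<r. (coef i j + \<tau> * coef i k) ^ (2 * s)) = 1 + \<tau> ^ (2 * s)"
proof -
  let ?D = "\<lambda>F. frechet_derivative F (at (meet j k))"
  define a where "a = ?D (cofactor d j) (line_dir j)"
  define b where "b = ?D (cofactor d k) (line_dir k)"
  have "a \<noteq> 0" "b \<noteq> 0"
    using frechet_derivative_cofactor_self[OF jk] frechet_derivative_cofactor_self[of k d j] jk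
    by (simp_all add: a_def b_def meet_commute)
  define w where "w = (1 / a) *\<^sub>R line_dir j + (\<tau> / b) *\<^sub>R line_dir k"
  have DG: "?D (G i) w = coef i j + \<tau> * coef i k" if "i < r" for i
    using frechet_derivative_lincomb[OF differentiable_G[OF that]] \<open>a \<noteq> 0\<close> \<open>b \<noteq> 0\<close>
      frechet_derivative_G_meet[OF that jk(1)] frechet_derivative_G_meet[OF that jk(2), of j]
    by (simp add: w_def a_def b_def meet_commute[of k j])
  have "?D (cofactor d m) (line_dir j) = (if m = j then a else 0)" for m
    using frechet_derivative_cofactor_other[OF _ jk(1)] by (simp add: a_def meet_def)
  moreover have "?D (cofactor d m) (line_dir k) = (if m = k then b else 0)" for m
    using frechet_derivative_cofactor_other[OF _ jk(2)] by (simp add: b_def meet_eq_line_snd)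
  ultimately have DH: "?D (cofactor d m) w ^ (2 * s) = of_bool (m = j) + of_bool (m = k) * \<tau> ^ (2 * s)" for m
    using frechet_derivative_lincomb[OF differentiable_cofactor] \<open>a \<noteq> 0\<close> \<open>b \<noteq> 0\<close> jk s_pos
    by (simp add: w_def)
  have "(\<Sum>i<r. ?D (G i) w ^ (2 * s)) = (\<Sum>m\<le>d. ?D (cofactor d m) w ^ (2 * s))"
    by (rule sum_powers_frechet_derivative_eq)
      (use jk in \<open>auto intro: differentiable_G differentiable_cofactor G_meet cofactor_meet sum_powers_eq\<close>)
  then show ?thesis
    using jk by (simp add: DG DH sum.distrib of_bool_def if_distrib[of "\<lambda>x. x * _"] cong: if_cong)
qed

lemma coef_biorthogonal:
  assumes "j \<le> d" "k \<le> d"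
  shows "(\<Sum>i<r. coef i k ^ (2 * s - 1) * coef i j) = (if j = k then 1 else 0)"
proof (cases "j = k")
  case True
  obtain k' where "k' \<le> d" "k' \<noteq> k"
    using d_pos by (metis le_zero_eq nat_le_linear zero_neq_one)
  have "(\<Sum>i<r. coef i k ^ (2 * s - 1) * coef i k) = (\<Sum>i<r. coef i k ^ (2 * s))"
    using s_pos by (simp add: power_Suc2[symmetric])
  with sum_powers_coef[OF assms(2) \<open>k' \<le> d\<close> \<open>k' \<noteq> k\<close>[symmetric], of 0] True s_pos
  show ?thesis by simp
next
  case False
  then show ?thesis
    using sum_power_affine_eq_imp[OF _ _ sum_powers_coef[OF assms(2,1)]] s_pos False by simp
qed

theorem num_terms_ge: "d + 1 \<le> r"
  using card_le_of_biorthogonal[where J = "{..d}" and v = "\<lambda>j i. coef i j"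
      and w = "\<lambda>k i. coef i k ^ (2 * s - 1)"] coef_biorthogonal
  by simp

end

section \<open>The forms attaining the bound\<close>

definition ell_form :: "nat \<Rightarrow> rpoly" where
  "ell_form l = var 0 1 + var 1 (real l) + var 2 ((real l)\<^sup>2)"

definition cofactor_form :: "nat \<Rightarrow> nat \<Rightarrow> rpoly" where
  "cofactor_form d j = prod ell_form ({..d} - {j})"

definition plane_chart :: "real \<times> real \<Rightarrow> nat \<Rightarrow> real" where
  "plane_chart z i = (if i = 0 then fst z else if i = 1 then snd z else if i = 2 then 1 else 0)"

lemma eval_cofactor_form: "eval_rpoly (cofactor_form d j) (plane_chart z) = cofactor d j z"
  by (simp add: cofactor_form_def cofactor_def eval_rpoly_prod ell_form_def ell_def plane_chart_def)

lemma is_form_cofactor_form: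
  assumes "3 \<le> n" "j \<le> d"
  shows "is_form n d (cofactor_form d j)"
proof -
  have "is_form n 1 (ell_form l)" for l
    unfolding ell_form_def using assms(1) by (intro is_form_add is_form_var) auto
  then show ?thesis
    using is_form_prod[of "{..d} - {j}" n ell_form] assms(2) by (simp add: cofactor_form_def)
qed

lemma differentiable_plane_chart: "(\<lambda>z. plane_chart z i) differentiable at z"
  by (cases "i = 0"; cases "i = 1")
    (simp_all add: plane_chart_def bounded_linear_imp_differentiable bounded_linear_fst bounded_linear_snd)

lemma poly_fun_le_plane_chart_line: "poly_fun_le 1 (\<lambda>t. plane_chart (line j t) i)"
proof -
  have "(\<lambda>t. plane_chart (line j t) i) = poly
      (if i = 0 then [:- (real j)\<^sup>2, - real j:] else if i = 1 then [:0, 1:] else if i = 2 then 1 else 0)"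
    by (auto simp: plane_chart_def line_def line_dir_def)
  then show ?thesis
    unfolding poly_fun_le_def by (auto intro!: exI simp: degree_pCons_eq_if)
qed

theorem sum_powers_rep_cofactor_forms_ge:
  assumes "3 \<le> n" "1 \<le> d" "1 \<le> s"
    and "sum_powers_rep (2 * s) n d r (\<Sum>j\<le>d. cofactor_form d j ^ (2 * s))"
  shows "d + 1 \<le> r"
proof -
  obtain fs where fs: "length fs = r" "\<And>g. g \<in> set fs \<Longrightarrow> is_form n d g"
    "(\<Sum>j\<le>d. cofactor_form d j ^ (2 * s)) = sum_list (map (\<lambda>g. g ^ (2 * s)) fs)"
    using assms(4) unfolding sum_powers_rep_def by blast
  interpret sum_powers_of_cofactors d s r "\<lambda>i z. eval_rpoly (fs ! i) (plane_chart z)"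
  proof
    show "poly_fun_le d (\<lambda>t. eval_rpoly (fs ! i) (plane_chart (line j t)))" if "i < r" for i j
      using that fs(1,2) by (intro poly_fun_le_eval_rpoly[where n = n] poly_fun_le_plane_chart_line) auto
    show "(\<Sum>i<r. eval_rpoly (fs ! i) (plane_chart z) ^ (2 * s)) = (\<Sum>m\<le>d. cofactor d m z ^ (2 * s))" for z
      using arg_cong[OF fs(3), of "\<lambda>p. eval_rpoly p (plane_chart z)"]
      by (simp add: eval_rpoly_sum eval_rpoly_sum_list eval_cofactor_form sum_list_sum_nth fs(1)
          atLeast0LessThan)
    show "(\<lambda>z. eval_rpoly (fs ! i) (plane_chart z)) differentiable at z" for i z
      by (rule differentiable_eval_rpoly[OF differentiable_plane_chart])
  qed (use assms in auto)
  show ?thesis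
    by (rule num_terms_ge)
qed

lemma enat_le_pyth:
  assumes "f \<in> SigmaPow m n d" "\<And>r. sum_powers_rep m n d r f \<Longrightarrow> N \<le> r"
  shows "enat N \<le> pyth m n d"
  unfolding pyth_def
proof (rule Inf_greatest, clarify)
  fix l assume "\<forall>f\<in>SigmaPow m n d. \<exists>r\<le>l. sum_powers_rep m n d r f"
  then obtain r where "r \<le> l" "sum_powers_rep m n d r f"
    using assms(1) by blast
  then show "enat N \<le> enat l"
    using assms(2) by (metis enat_ord_simps(1) order_trans)
qed

theorem mainTheorem6:
  fixes n s :: nat
  assumes "n \<ge> 3" and "s \<ge> 1"
  shows "\<forall>N::nat. \<forall>\<^sub>F d in sequentially. enat N \<le> pyth (2 * s) n d"
proof (intro allI eventually_sequentiallyI)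
  fix N d :: nat
  assume "max 1 N \<le> d"
  let ?f = "\<Sum>j\<le>d. cofactor_form d j ^ (2 * s)"
  have "sum_powers_rep (2 * s) n d (d + 1) ?f"
    unfolding sum_powers_rep_def
    by (intro exI[of _ "map (cofactor_form d) [0..<d + 1]"])
      (auto simp: is_form_cofactor_form assms(1) interv_sum_list_conv_sum_set_nat atLeast0LessThan
        lessThan_Suc_atMost simp del: upt_Suc)
  then have "?f \<in> SigmaPow (2 * s) n d"
    unfolding SigmaPow_def by blast
  moreover have "N \<le> r" if "sum_powers_rep (2 * s) n d r ?f" for r
    using sum_powers_rep_cofactor_forms_ge[OF assms(1) _ assms(2) that] \<open>max 1 N \<le> d\<close> by simp
  ultimately show "enat N \<le> pyth (2 * s) n d"
    by (rule enat_le_pyth)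
qed

end
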